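(* Let $k\ge1$, $a_i,b_i,c_i\in\mathbb{C}$ ($1\le i\le k$) with $\prod_{j=1}^kc_j\neq0$ and $\prod_{j=1}^kb_j\neq0$, let $T(f)$ be the tridiagonal $k$-Toeplitz operator on $\ell^2(\mathbb{N})$ with symbol $f$, and let $\lambda\in\mathbb{C}\setminus\sigma_{ess}(T(f))$. If $\sum_{j=1}^k\operatorname{wind}(\lambda_j(\mathbb{T}),\lambda)<0$, then there exist an eigenvector $\mathbf{x}\in\ell^2$ of $T(f)$ with eigenvalue $\lambda$ and some $\rho<1$ such that $$\frac{|\mathbf{x}_j|}{\max_i|\mathbf{x}_i|}\le C\,\lceil j/k\rceil\,\rho^{\lceil j/k\rceil-1},\qquad j\ge1,$$ where $C>0$ is a constant depending only on $\lambda$ and $a_p,b_p,c_p$, $1\le p\le k$.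
   Context: The tridiagonal $k$-Toeplitz operator $T(f)$ on $\ell^2(\mathbb{N})$ has matrix entries $(i,i)=a_{p(i)}$, $(i,i+1)=b_{p(i)}$, $(i+1,i)=c_{p(i)}$, $p(i)=((i-1)\bmod k)+1$, all other entries zero. Its symbol is $f(z)=A_{-1}z^{-1}+A_0+A_1z$, where $A_0$ is the $k\times k$ tridiagonal matrix with diagonal $a_1,\dots,a_k$, superdiagonal $b_1,\dots,b_{k-1}$, subdiagonal $c_1,\dots,c_{k-1}$; $A_{-1}$ has single nonzero entry $b_k$ at $(k,1)$; $A_1$ has single nonzero entry $c_k$ at $(1,k)$. $\mathbb{T}$ is the unit circle. $\sigma_{ess}(T(f))$ is the set of $\lambda$ with $T(f)-\lambda I$ not Fredholm. With $\lambda_1(z),\dots,\lambda_k(z)$ the eigenvalues of $f(z)$, $\sum_j\operatorname{wind}(\lambda_j(\mathbb{T}),\lambda)$ denotes the winding number about $0$ of $z\mapsto\det(f(z)-\lambda I)=\prod_j(\lambda_j(z)-\lambda)$ as $z$ traverses $\mathbb{T}$ counterclockwise. *)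

theory Defs
  imports "HOL-Complex_Analysis.Complex_Analysis" "Jordan_Normal_Form.Determinant"
begin

text \<open>Sequences x :: nat => complex represent vectors indexed by 1,2,3,...:
  the paper's x_i is x (i - 1). The coefficients a, b, c are indexed 1..k as in the paper.\<close>

definition period_index :: "nat \<Rightarrow> nat \<Rightarrow> nat" where
  "period_index k n = (n mod k) + 1"   \<comment> \<open>p(i) for i = n + 1\<close>

text \<open>The tridiagonal k-Toeplitz operator T(f), acting on sequences (each row has finitely
  many nonzero entries, so the action is defined for every sequence).\<close>
definition ktoeplitz ::
  "nat \<Rightarrow> (nat \<Rightarrow> complex) \<Rightarrow> (nat \<Rightarrow> complex) \<Rightarrow> (nat \<Rightarrow> complex) \<Rightarrow>
   (nat \<Rightarrow> complex) \<Rightarrow> (nat \<Rightarrow> complex)" where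
  "ktoeplitz k a b c x = (\<lambda>n.
      (if n = 0 then 0 else c (period_index k (n - 1)) * x (n - 1))
      + a (period_index k n) * x n
      + b (period_index k n) * x (Suc n))"

definition is_l2 :: "(nat \<Rightarrow> complex) \<Rightarrow> bool" where
  "is_l2 x \<longleftrightarrow> summable (\<lambda>n. (cmod (x n))\<^sup>2)"

definition l2norm :: "(nat \<Rightarrow> complex) \<Rightarrow> real" where
  "l2norm x = sqrt (\<Sum>n. (cmod (x n))\<^sup>2)"

definition lin_comb :: "complex list \<Rightarrow> (nat \<Rightarrow> complex) list \<Rightarrow> (nat \<Rightarrow> complex)" where
  "lin_comb cs vs = (\<lambda>n. \<Sum>i<length vs. cs ! i * (vs ! i) n)"

definition fin_dim_set :: "(nat \<Rightarrow> complex) set \<Rightarrow> bool" where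
  "fin_dim_set S \<longleftrightarrow> (\<exists>vs. \<forall>x\<in>S. \<exists>cs. length cs = length vs \<and> x = lin_comb cs vs)"

definition l2_closed :: "(nat \<Rightarrow> complex) set \<Rightarrow> bool" where
  "l2_closed S \<longleftrightarrow> (\<forall>u w. (\<forall>m. u m \<in> S \<and> is_l2 (u m)) \<longrightarrow> is_l2 w \<longrightarrow>
       (\<lambda>m. l2norm (\<lambda>n. u m n - w n)) \<longlonglongrightarrow> 0 \<longrightarrow> w \<in> S)"

text \<open>Fredholm operator on l^2(N): finite-dimensional kernel, closed range,
  finite-codimensional range (range plus a finite-dimensional subspace of l^2 is all of l^2).\<close>
definition fredholm_l2 :: "((nat \<Rightarrow> complex) \<Rightarrow> (nat \<Rightarrow> complex)) \<Rightarrow> bool" where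
  "fredholm_l2 A \<longleftrightarrow>
     fin_dim_set {x. is_l2 x \<and> A x = (\<lambda>_. 0)} \<and>
     l2_closed (A ` {x. is_l2 x}) \<and>
     (\<exists>vs. (\<forall>v\<in>set vs. is_l2 v) \<and>
        (\<forall>y. is_l2 y \<longrightarrow> (\<exists>x cs. is_l2 x \<and> length cs = length vs \<and>
              y = (\<lambda>n. A x n + lin_comb cs vs n))))"

definition ess_spectrum_ktoeplitz ::
  "nat \<Rightarrow> (nat \<Rightarrow> complex) \<Rightarrow> (nat \<Rightarrow> complex) \<Rightarrow> (nat \<Rightarrow> complex) \<Rightarrow> complex set" where
  "ess_spectrum_ktoeplitz k a b c =
     {lam. \<not> fredholm_l2 (\<lambda>x n. ktoeplitz k a b c x n - lam * x n)}"

text \<open>The symbol f(z) = A_{-1} z^{-1} + A_0 + A_1 z as a k x k matrix (0-based entries: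
  the paper's entry (r,s) is entry (r-1,s-1) here).\<close>
definition symbol_mat ::
  "nat \<Rightarrow> (nat \<Rightarrow> complex) \<Rightarrow> (nat \<Rightarrow> complex) \<Rightarrow> (nat \<Rightarrow> complex) \<Rightarrow> complex \<Rightarrow> complex mat" where
  "symbol_mat k a b c z = mat k k (\<lambda>(r, s).
      (if r = s then a (r + 1) else 0)
    + (if s = r + 1 then b (r + 1) else 0)
    + (if r = s + 1 then c (s + 1) else 0)
    + (if r = k - 1 \<and> s = 0 then b k / z else 0)
    + (if r = 0 \<and> s = k - 1 then c k * z else 0))"

text \<open>Sum of winding numbers of the eigenvalue curves about lambda: winding number about 0
  of z |-> det(f(z) - lambda I), z running once counterclockwise over the unit circle.\<close>
definition total_winding ::
  "nat \<Rightarrow> (nat \<Rightarrow> complex) \<Rightarrow> (nat \<Rightarrow> complex) \<Rightarrow> (nat \<Rightarrow> complex) \<Rightarrow> complex \<Rightarrow> complex" where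
  "total_winding k a b c lam =
     winding_number (\<lambda>t. Determinant.det (symbol_mat k a b c (cis (2 * pi * t)) - lam \<cdot>\<^sub>m 1\<^sub>m k)) 0"

end

theory Submission
  imports Defs
begin

(*
  The solutions of all rows but the first of (T(f) - lambda) x = 0 form a two-dimensional space,
  on which the shift by one period k acts as the monodromy matrix; its eigenvalues are the
  Floquet multipliers.

  A multiplier mu with |mu| = 1 yields a bounded Bloch solution phi, phi (n + k) = mu phi n.
  Damping it by (m + 1)^(-1/2) on the m-th period gives a sequence psi that is not
  square-summable, while w = (T(f) - lambda) psi is square-summable and the l2-limit of the
  images of the truncations of psi. As the kernel of T(f) - lambda on all sequences is spanned
  by a single solution, no l2 vector is mapped to w, so the range is not closed and lambda lies
  in the essential spectrum.

  A Bloch solution with multiplier mu is a kernel vector of f(1/mu) - lambda, so the Laurent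
  trinomial det (f(z) - lambda) = X + Y/z + Z z vanishes exactly at the reciprocals of the
  multipliers. A multiplier with |mu| > 1 thus gives a zero inside the unit disc, which makes
  the winding number nonnegative.

  Hence both multipliers lie in the open unit disc, and the solution that also satisfies the
  first row decays like (m + 1) rho^m on the m-th period.
*)

no_notation vec_nth (infixl \<open>$\<close> 90)

lemma sum_if_eq_mult:
  "finite S \<Longrightarrow> (\<Sum>j\<in>S. (if j = t then x else 0) * f j) = (if t \<in> S then x * f t else (0::'a::comm_semiring_1))"
  by (simp add: if_distrib[of "\<lambda>y. y * f _"] sum.delta' cong: if_cong)

section \<open>Square-summable sequences\<close>

lemma is_l2_Suc_iff: "is_l2 (\<lambda>n. f (Suc n)) \<longleftrightarrow> is_l2 f"
  unfolding is_l2_def using summable_Suc_iff[where f = "\<lambda>n. (cmod (f n))\<^sup>2"] by simp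

lemma is_l2_norm_le:
  assumes "\<And>n. cmod (f n) \<le> g n" and "summable (\<lambda>n. (g n)\<^sup>2)"
  shows "is_l2 f"
proof -
  have "norm ((cmod (f n))\<^sup>2) \<le> (g n)\<^sup>2" for n
    using power_mono[OF assms(1)[of n] norm_ge_zero, of 2] by simp
  then show ?thesis
    unfolding is_l2_def by (rule summable_comparison_test'[OF assms(2)])
qed

lemma square_sum_le: "((x::real) + y)\<^sup>2 \<le> 2 * x\<^sup>2 + 2 * y\<^sup>2"
  using zero_le_power2[of "x - y"] by (simp add: power2_eq_square algebra_simps)

lemma is_l2_add:
  assumes "is_l2 f" and "is_l2 g"
  shows "is_l2 (\<lambda>n. f n + g n)"
  unfolding is_l2_def
proof (rule summable_comparison_test')
  show "summable (\<lambda>n. 2 * (cmod (f n))\<^sup>2 + 2 * (cmod (g n))\<^sup>2)"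
    using assms unfolding is_l2_def by (intro summable_add summable_mult)
  fix n
  have "(cmod (f n + g n))\<^sup>2 \<le> (cmod (f n) + cmod (g n))\<^sup>2"
    by (rule power_mono[OF norm_triangle_ineq norm_ge_zero])
  also have "\<dots> \<le> 2 * (cmod (f n))\<^sup>2 + 2 * (cmod (g n))\<^sup>2"
    by (rule square_sum_le)
  finally show "norm ((cmod (f n + g n))\<^sup>2) \<le> 2 * (cmod (f n))\<^sup>2 + 2 * (cmod (g n))\<^sup>2"
    by simp
qed

lemma is_l2_finite_support: "(\<And>n. N \<le> n \<Longrightarrow> f n = 0) \<Longrightarrow> is_l2 f"
  unfolding is_l2_def
  by (rule summable_finite[of "{..<N}"]) (auto simp: not_less)

lemma is_l2_imp_LIMSEQ_zero:
  assumes "is_l2 f"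
  shows "f \<longlonglongrightarrow> 0"
proof -
  have "(\<lambda>n. (cmod (f n))\<^sup>2) \<longlonglongrightarrow> 0"
    using assms unfolding is_l2_def by (rule summable_LIMSEQ_zero)
  then show ?thesis
    by (simp add: tendsto_norm_zero_iff)
qed

lemma is_l2_comp_affine:
  assumes "is_l2 x" and "k \<ge> 1"
  shows "is_l2 (\<lambda>m. x (m * k + r))"
proof -
  have "inj (\<lambda>m. m * k + r)" using assms(2) by (intro injI) simp
  from summable_reindex[OF assms(1)[unfolded is_l2_def] this]
  show ?thesis unfolding is_l2_def by (simp add: o_def)
qed

lemma norm_div_SUP_le:
  assumes "is_l2 x" and "x 0 = 1"
  shows "cmod (x n) / (SUP i. cmod (x i)) \<le> cmod (x n)"
proof -
  obtain B where "\<And>n. cmod (x n) \<le> B"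
    using convergent_imp_Bseq[OF convergentI[OF is_l2_imp_LIMSEQ_zero[OF assms(1)]]] by (auto simp: Bseq_def)
  then have sup: "1 \<le> (SUP i. cmod (x i))"
    using cSUP_upper[of 0 UNIV "\<lambda>i. cmod (x i)"] by (auto simp: assms(2) bdd_above_def)
  have "cmod (x n) * 1 \<le> cmod (x n) * (SUP i. cmod (x i))"
    by (intro mult_left_mono sup) simp
  then show ?thesis
    using sup by (simp add: divide_le_eq)
qed

lemma summable_tail_LIMSEQ_zero:
  fixes f :: "nat \<Rightarrow> real"
  assumes "summable f"
  shows "(\<lambda>N. \<Sum>n. f (n + N)) \<longlonglongrightarrow> 0"
proof -
  have "(\<lambda>N. suminf f - (\<Sum>n<N. f n)) \<longlonglongrightarrow> suminf f - suminf f"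
    by (intro tendsto_intros summable_LIMSEQ assms)
  moreover have "(\<Sum>n. f (n + N)) = suminf f - (\<Sum>n<N. f n)" for N
    using suminf_split_initial_segment[OF assms, of N] by simp
  ultimately show ?thesis by simp
qed

text \<open>The two-point term accounts for the rows of a tridiagonal operator that straddle the
  truncation point N.\<close>

lemma l2norm_LIMSEQ_zero_of_tail_bound:
  assumes v: "\<And>N n. cmod (v N n) \<le>
      (if N \<le> n then cmod (w n) else 0) + (if n = N \<or> Suc n = N then e N else 0)"
    and w: "is_l2 w" and e: "e \<longlonglongrightarrow> 0"
  shows "(\<lambda>N. l2norm (v N)) \<longlonglongrightarrow> 0"
proof -
  define F where "F N n = (if N \<le> n then (cmod (w n))\<^sup>2 else 0)" for N n
  define H where "H N n = (if n = N then (e N)\<^sup>2 else 0) + (if n = N - 1 then (e N)\<^sup>2 else 0)" for N n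
  have w_sq: "summable (\<lambda>n. (cmod (w n))\<^sup>2)" using w by (simp add: is_l2_def)
  have F: "summable (F N)" for N
    by (rule summable_comparison_test'[OF w_sq]) (simp add: F_def)
  have H: "H N sums ((e N)\<^sup>2 + (e N)\<^sup>2)" for N
    unfolding H_def[abs_def] by (intro sums_add sums_single)
  have bound: "(cmod (v N n))\<^sup>2 \<le> 2 * F N n + 2 * H N n" for N n
  proof -
    have "(cmod (v N n))\<^sup>2 \<le> ((if N \<le> n then cmod (w n) else 0) + (if n = N \<or> Suc n = N then e N else 0))\<^sup>2"
      by (intro power_mono v) simp
    also have "\<dots> \<le> 2 * (if N \<le> n then cmod (w n) else 0)\<^sup>2 + 2 * (if n = N \<or> Suc n = N then e N else 0)\<^sup>2"
      by (rule square_sum_le)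
    also have "\<dots> \<le> 2 * F N n + 2 * H N n"
      by (cases "N \<le> n"; cases "n = N"; cases "Suc n = N") (simp_all add: F_def H_def)
    finally show ?thesis .
  qed
  have majorant: "summable (\<lambda>n. 2 * F N n + 2 * H N n)" for N
    by (intro summable_add summable_mult F sums_summable[OF H])
  have v_sq: "summable (\<lambda>n. (cmod (v N n))\<^sup>2)" for N
    by (rule summable_comparison_test'[OF majorant[of N]]) (simp add: bound)
  have "(\<Sum>n. (cmod (v N n))\<^sup>2) \<le> (\<Sum>n. 2 * F N n + 2 * H N n)" for N
    by (intro suminf_le bound v_sq majorant)
  also have "(\<Sum>n. 2 * F N n + 2 * H N n) = 2 * suminf (F N) + 4 * (e N)\<^sup>2" for N
    using sums_unique[OF sums_add[OF sums_mult[OF summable_sums[OF F]] sums_mult[OF H]], of 2 N 2]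
    by simp
  finally have le: "l2norm (v N) \<le> sqrt (2 * suminf (F N) + 4 * (e N)\<^sup>2)" for N
    unfolding l2norm_def by (rule real_sqrt_le_mono)
  have "suminf (F N) = (\<Sum>n. (cmod (w (n + N)))\<^sup>2)" for N
    using suminf_split_initial_segment[OF F[of N], of N] by (simp add: F_def)
  then have "(\<lambda>N. suminf (F N)) \<longlonglongrightarrow> 0"
    using summable_tail_LIMSEQ_zero[OF w_sq] by simp
  then have "(\<lambda>N. sqrt (2 * suminf (F N) + 4 * (e N)\<^sup>2)) \<longlonglongrightarrow> sqrt (2 * 0 + 4 * 0\<^sup>2)"
    by (intro tendsto_intros e)
  then have lim: "(\<lambda>N. sqrt (2 * suminf (F N) + 4 * (e N)\<^sup>2)) \<longlonglongrightarrow> 0"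
    by simp
  have nonneg: "0 \<le> l2norm (v N)" for N
    unfolding l2norm_def by (intro real_sqrt_ge_zero suminf_nonneg v_sq) simp
  show ?thesis
    by (rule tendsto_sandwich[OF always_eventually always_eventually tendsto_const lim])
       (use nonneg le in blast)+
qed

lemma summable_comp_div:
  fixes f :: "nat \<Rightarrow> real"
  assumes "summable f" and "\<And>n. 0 \<le> f n" and "k \<ge> 1"
  shows "summable (\<lambda>n. f (n div k))"
proof (rule summableI_nonneg_bounded[where x = "real k * suminf f"])
  fix N
  have "(\<Sum>n<N. f (n div k)) \<le> (\<Sum>n<N * k. f (n div k))"
    by (intro sum_mono2) (use assms in auto)
  also have "\<dots> = (\<Sum>m<N. \<Sum>n\<in>{m * k..<m * k + k}. f (n div k))"
    by (rule sum.nat_group[symmetric])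
  also have "\<dots> = (\<Sum>m<N. real k * f m)"
  proof (intro sum.cong refl)
    fix m
    have "n div k = m" if "n \<in> {m * k..<m * k + k}" for n
      using that by (intro div_nat_eqI) (auto simp: mult.commute)
    then show "(\<Sum>n\<in>{m * k..<m * k + k}. f (n div k)) = real k * f m"
      by simp
  qed
  also have "\<dots> \<le> real k * suminf f"
    unfolding sum_distrib_left[symmetric] by (intro mult_left_mono sum_le_suminf) (use assms in auto)
  finally show "(\<Sum>n<N. f (n div k)) \<le> real k * suminf f" .
qed (use assms in auto)

lemma linear_times_power_le:
  fixes \<theta> :: real
  assumes "0 \<le> \<theta>" and "\<theta> < 1"
  shows "(real m + 1) * \<theta> ^ m \<le> 1 / (1 - \<theta>)"
proof -
  have "(real m + 1) * \<theta> ^ m = (\<Sum>i<Suc m. \<theta> ^ m)"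
    by simp
  also have "\<dots> \<le> (\<Sum>i<Suc m. \<theta> ^ i)"
    by (intro sum_mono power_decreasing) (use assms in auto)
  also have "\<dots> \<le> (\<Sum>i. \<theta> ^ i)"
    by (intro sum_le_suminf summable_geometric) (use assms in auto)
  also have "\<dots> = 1 / (1 - \<theta>)"
    using suminf_geometric[of \<theta>] assms by simp
  finally show ?thesis .
qed

lemma is_l2_of_block_bound:
  assumes x: "\<And>n. cmod (x n) \<le> K * (real (n div k) + 1) * \<rho> ^ (n div k)"
    and "0 \<le> \<rho>" and "\<rho> < 1" and "k \<ge> 1"
  shows "is_l2 x"
proof -
  define \<sigma> where "\<sigma> = sqrt \<rho>"
  have \<sigma>: "0 \<le> \<sigma>" "\<sigma> < 1" "\<rho> = \<sigma>\<^sup>2"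
    using assms by (auto simp: \<sigma>_def)
  have K: "0 \<le> K"
    using order_trans[OF norm_ge_zero x[of 0]] by simp
  have bound: "cmod (x n) \<le> K / (1 - \<sigma>) * \<sigma> ^ (n div k)" for n
  proof -
    have "(real (n div k) + 1) * \<rho> ^ (n div k) = ((real (n div k) + 1) * \<sigma> ^ (n div k)) * \<sigma> ^ (n div k)"
      by (simp add: \<sigma> power_mult_distrib power2_eq_square)
    also have "\<dots> \<le> 1 / (1 - \<sigma>) * \<sigma> ^ (n div k)"
      by (intro mult_right_mono linear_times_power_le) (use \<sigma> in auto)
    finally show ?thesis
      using x[of n] mult_left_mono[OF _ K] by (fastforce simp: mult.assoc)
  qed
  have square_power: "(\<sigma> ^ m)\<^sup>2 = (\<sigma>\<^sup>2) ^ m" for m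
    by (metis power_mult mult.commute)
  have pointwise: "(cmod (x n))\<^sup>2 \<le> (K / (1 - \<sigma>))\<^sup>2 * (\<sigma>\<^sup>2) ^ (n div k)" for n
  proof -
    have "(cmod (x n))\<^sup>2 \<le> (K / (1 - \<sigma>) * \<sigma> ^ (n div k))\<^sup>2"
      by (rule power_mono[OF bound norm_ge_zero])
    also have "\<dots> = (K / (1 - \<sigma>))\<^sup>2 * (\<sigma>\<^sup>2) ^ (n div k)"
      by (simp only: power_mult_distrib square_power)
    finally show ?thesis .
  qed
  have "summable (\<lambda>m. (K / (1 - \<sigma>))\<^sup>2 * (\<sigma>\<^sup>2) ^ m)"
    using \<sigma> \<open>\<rho> < 1\<close> by (intro summable_mult summable_geometric) simp
  then have majorant: "summable (\<lambda>n. (K / (1 - \<sigma>))\<^sup>2 * (\<sigma>\<^sup>2) ^ (n div k))"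
    by (rule summable_comp_div) (use assms in auto)
  show ?thesis
    unfolding is_l2_def by (rule summable_comparison_test'[OF majorant, where N = 0]) (simp add: pointwise)
qed

lemma ceiling_Suc_div:
  assumes "k \<ge> 1"
  shows "\<lceil>real (Suc n) / real k\<rceil> = int (n div k + 1)"
proof (rule ceiling_unique)
  have k: "real k > 0"
    using assms by simp
  have "real (n div k) * real k \<le> real n"
    using div_times_less_eq_dividend[of n k] by (simp flip: of_nat_mult)
  then show "real_of_int (int (n div k + 1)) - 1 < real (Suc n) / real k"
    using k by (simp add: pos_less_divide_eq)
  have "n div k * k + n mod k = n" and "n mod k < k"
    using assms by simp_all
  then have "Suc n \<le> n div k * k + k"
    by linarith
  then have "Suc n \<le> (n div k + 1) * k"
    by (simp add: algebra_simps)
  then have "real (Suc n) \<le> real (n div k + 1) * real k"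
    by (simp only: of_nat_le_iff flip: of_nat_mult)
  then show "real (Suc n) / real k \<le> real_of_int (int (n div k + 1))"
    using k by (simp add: pos_divide_le_eq)
qed

definition damp :: "nat \<Rightarrow> real" where
  "damp m = inverse (sqrt (real (Suc m)))"

lemma damp_nonneg: "0 \<le> damp m"
  by (simp add: damp_def)

lemma damp_Suc_le: "damp (Suc m) \<le> damp m"
  unfolding damp_def by (intro real_sqrt_le_mono le_imp_inverse_le) auto

lemma damp_le_one: "damp m \<le> 1"
  by (simp add: damp_def inverse_le_1_iff)

lemma damp_LIMSEQ_zero: "damp \<longlonglongrightarrow> 0"
  using tendsto_real_sqrt[OF LIMSEQ_inverse_real_of_nat] by (simp add: damp_def[abs_def] real_sqrt_inverse)

lemma summable_damp_diff_sq: "summable (\<lambda>m. (damp m - damp (Suc m))\<^sup>2)"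
proof -
  have summable: "summable (\<lambda>m. damp m - damp (Suc m))"
  proof (rule summableI_nonneg_bounded[where x = "damp 0"])
    show "(\<Sum>m<N. damp m - damp (Suc m)) \<le> damp 0" for N
      using sum_lessThan_telescope'[of damp N] damp_nonneg[of N] by simp
  qed (simp add: damp_Suc_le)
  have le: "(damp m - damp (Suc m))\<^sup>2 \<le> damp m - damp (Suc m)" for m
    using damp_Suc_le[of m] damp_nonneg[of "Suc m"] damp_le_one[of m]
    by (auto simp: power2_eq_square intro!: mult_left_le)
  show ?thesis
    by (rule summable_comparison_test'[OF summable, where N = 0]) (simp add: le)
qed

lemma damp_div_diff_le: "\<bar>damp (n div k) - damp (Suc n div k)\<bar> \<le> damp (n div k) - damp (Suc (n div k))"
  using damp_Suc_le[of "n div k"] by (cases "Suc n mod k = 0") (simp_all add: div_Suc)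

lemma not_is_l2_damped:
  assumes "\<And>m. cmod (X m) = C * damp m" and "C > 0"
  shows "\<not> is_l2 X"
proof
  assume "is_l2 X"
  then have "summable (\<lambda>m. inverse (C\<^sup>2) * (cmod (X m))\<^sup>2)"
    unfolding is_l2_def by (rule summable_mult)
  moreover have "inverse (C\<^sup>2) * (cmod (X m))\<^sup>2 = inverse (real (Suc m))" for m
    using assms by (simp add: damp_def power_mult_distrib real_sqrt_inverse power_inverse)
  ultimately have "summable (\<lambda>m. inverse (real (Suc m)))"
    by simp
  then show False
    using not_summable_harmonic[where 'a = real] summable_Suc_iff[of "\<lambda>n. inverse (real n)"] by simp
qed

section \<open>Second-order linear recurrences\<close>

lemma linear_recurrence2_norm_le:
  fixes Y :: "nat \<Rightarrow> complex"
  assumes rec: "\<And>m. Y (Suc (Suc m)) = (\<mu> + \<nu>) * Y (Suc m) - \<mu> * \<nu> * Y m"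
    and \<mu>: "cmod \<mu> \<le> \<rho>" and \<nu>: "cmod \<nu> \<le> \<rho>" and \<rho>: "\<rho> > 0"
  shows "cmod (Y m) \<le> (cmod (Y 0) + cmod (Y 1 - \<nu> * Y 0) / \<rho>) * (real m + 1) * \<rho> ^ m"
proof -
  define Z where "Z m = Y (Suc m) - \<nu> * Y m" for m
  have "Z (Suc m) = \<mu> * Z m" for m
    by (simp add: Z_def rec algebra_simps)
  then have Z_pow: "Z m = \<mu> ^ m * Z 0" for m
    by (induction m) simp_all
  have Z: "cmod (Z m) \<le> \<rho> ^ m * cmod (Z 0)" for m
    using Z_pow[of m] by (simp add: norm_mult norm_power mult_right_mono power_mono \<mu>)
  have Y: "cmod (Y m) \<le> (cmod (Y 0) + real m * cmod (Z 0) / \<rho>) * \<rho> ^ m" for m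
  proof (induction m)
    case (Suc m)
    have "cmod (Y (Suc m)) = cmod (\<nu> * Y m + Z m)"
      by (simp add: Z_def)
    also have "\<dots> \<le> cmod \<nu> * cmod (Y m) + cmod (Z m)"
      using norm_triangle_ineq[of "\<nu> * Y m" "Z m"] by (simp add: norm_mult)
    also have "\<dots> \<le> \<rho> * ((cmod (Y 0) + real m * cmod (Z 0) / \<rho>) * \<rho> ^ m) + \<rho> ^ m * cmod (Z 0)"
      by (intro add_mono mult_mono Suc Z \<nu>) (use \<rho> in auto)
    also have "\<dots> = (cmod (Y 0) + real (Suc m) * cmod (Z 0) / \<rho>) * \<rho> ^ Suc m"
      using \<rho> by (simp add: field_simps)
    finally show ?case .
  qed simp
  have "cmod (Y 0) + real m * cmod (Z 0) / \<rho> \<le> (cmod (Y 0) + cmod (Z 0) / \<rho>) * (real m + 1)"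
    using \<rho> by (simp add: field_simps)
  then have "(cmod (Y 0) + real m * cmod (Z 0) / \<rho>) * \<rho> ^ m \<le> (cmod (Y 0) + cmod (Z 0) / \<rho>) * (real m + 1) * \<rho> ^ m"
    using \<rho> by (intro mult_right_mono) auto
  with Y[of m] show ?thesis
    by (simp add: Z_def)
qed

lemma linear_recurrence2_unimodular_is_l2:
  fixes Y :: "nat \<Rightarrow> complex"
  assumes rec: "\<And>m. Y (Suc (Suc m)) = (\<mu> + \<nu>) * Y (Suc m) - \<mu> * \<nu> * Y m"
    and \<mu>: "cmod \<mu> = 1" and Y: "Y \<longlonglongrightarrow> 0"
  shows "is_l2 Y"
proof -
  define Z where "Z m = Y (Suc m) - \<nu> * Y m" for m
  have "Z (Suc m) = \<mu> * Z m" for m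
    by (simp add: Z_def rec algebra_simps)
  then have Z_pow: "Z m = \<mu> ^ m * Z 0" for m
    by (induction m) simp_all
  have norm_Z: "cmod (Z m) = cmod (Z 0)" for m
    using Z_pow[of m] by (simp add: norm_mult norm_power \<mu>)
  have "(\<lambda>m. cmod (Z m)) = (\<lambda>_. cmod (Z 0))"
    by (rule ext) (rule norm_Z)
  moreover have "(\<lambda>m. cmod (Z m)) \<longlonglongrightarrow> cmod (0 - \<nu> * 0)"
    unfolding Z_def by (intro tendsto_intros LIMSEQ_Suc Y)
  ultimately have "Z 0 = 0"
    using LIMSEQ_unique[OF tendsto_const] by fastforce
  then have Z0: "Y (Suc m) = \<nu> * Y m" for m
    using Z_pow[of m] by (simp add: Z_def)
  then have Y_pow: "Y m = \<nu> ^ m * Y 0" for m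
    by (induction m) simp_all
  show ?thesis
  proof (cases "cmod \<nu> < 1")
    case True
    have "summable (\<lambda>m. (cmod (Y 0))\<^sup>2 * ((cmod \<nu>)\<^sup>2) ^ m)"
      using True by (intro summable_mult summable_geometric) (simp add: abs_square_less_1)
    moreover have "(cmod (Y m))\<^sup>2 = (cmod (Y 0))\<^sup>2 * ((cmod \<nu>)\<^sup>2) ^ m" for m
      using power_mult[of "cmod \<nu>" m 2] power_mult[of "cmod \<nu>" 2 m]
      by (simp add: Y_pow[of m] norm_mult norm_power power_mult_distrib mult.commute)
    then have "(\<lambda>m. (cmod (Y m))\<^sup>2) = (\<lambda>m. (cmod (Y 0))\<^sup>2 * ((cmod \<nu>)\<^sup>2) ^ m)"
      by (rule ext)
    ultimately show ?thesis
      unfolding is_l2_def by (simp only:)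
  next
    case False
    have "cmod (Y 0) \<le> cmod (Y m)" for m
      using False by (simp add: Y_pow[of m] norm_mult norm_power one_le_power mult_le_cancel_right1)
    then have "cmod (Y 0) \<le> 0"
      using tendsto_norm[OF Y] by (intro LIMSEQ_le_const[of "\<lambda>m. cmod (Y m)"]) auto
    then have "Y m = 0" for m
      by (simp add: Y_pow[of m])
    then show ?thesis
      by (intro is_l2_finite_support[of 0]) simp
  qed
qed

section \<open>Winding numbers of Laurent trinomials\<close>

lemma winding_number_unit_circlepath:
  assumes "cmod s \<noteq> 1"
  shows "winding_number (circlepath 0 1) s = (if cmod s < 1 then 1 else 0)"
proof (cases "cmod s < 1")
  case True
  then show ?thesis
    by (simp add: winding_number_circlepath)
next
  case False
  then have "s \<notin> cball 0 1"
    using assms by auto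
  then have "winding_number (circlepath 0 1) s = 0"
    by (intro winding_number_zero_outside[of _ "cball 0 1"]) auto
  then show ?thesis
    using False by simp
qed

definition laurent_trinomial :: "(complex \<Rightarrow> complex) \<Rightarrow> bool" where
  "laurent_trinomial f \<longleftrightarrow> (\<exists>X Y Z. \<forall>z. z \<noteq> 0 \<longrightarrow> f z = X + Y / z + Z * z)"

lemma laurent_trinomial_sum:
  assumes "finite S" and "\<And>s. s \<in> S \<Longrightarrow> laurent_trinomial (f s)"
  shows "laurent_trinomial (\<lambda>z. \<Sum>s\<in>S. f s z)"
  using assms
proof (induction S rule: finite_induct)
  case empty
  show ?case
    unfolding laurent_trinomial_def by (intro exI[of _ 0]) simp
next
  case (insert s S)
  obtain X Y Z where "\<forall>z. z \<noteq> 0 \<longrightarrow> f s z = X + Y / z + Z * z"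
    using insert.prems[of s] by (auto simp: laurent_trinomial_def)
  moreover obtain X' Y' Z' where "\<forall>z. z \<noteq> 0 \<longrightarrow> (\<Sum>s\<in>S. f s z) = X' + Y' / z + Z' * z"
    using insert.IH insert.prems by (auto simp: laurent_trinomial_def)
  ultimately show ?case
    unfolding laurent_trinomial_def using insert.hyps
    by (intro exI[of _ "X + X'"] exI[of _ "Y + Y'"] exI[of _ "Z + Z'"]) (auto simp: add_divide_distrib algebra_simps)
qed

lemma laurent_trinomial_mult_left:
  assumes "laurent_trinomial f"
  shows "laurent_trinomial (\<lambda>z. C * f z)"
proof -
  obtain X Y Z where "\<forall>z. z \<noteq> 0 \<longrightarrow> f z = X + Y / z + Z * z"
    using assms by (auto simp: laurent_trinomial_def)
  then show ?thesis
    unfolding laurent_trinomial_def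
    by (intro exI[of _ "C * X"] exI[of _ "C * Y"] exI[of _ "C * Z"]) (simp add: distrib_left mult.assoc)
qed

lemma laurent_trinomial_linear_mult_inverse_linear:
  "laurent_trinomial (\<lambda>z. (A + B * z) * (C + D / z))"
  unfolding laurent_trinomial_def
  by (intro exI[of _ "A * C + B * D"] exI[of _ "A * D"] exI[of _ "B * C"]) (auto simp: field_simps)

lemma laurent_trinomial_root_coeff:
  fixes r z X Y Z :: complex
  assumes "r \<noteq> 0" and "X + Y / r + Z * r = 0"
  shows "Y = - r * (X + Z * r)"
proof -
  have "Y = r * (X + Y / r + Z * r) - r * (X + Z * r)"
    using assms(1) by (simp add: algebra_simps)
  then show ?thesis
    using assms(2) by simp
qed

lemma laurent_trinomial_root_factor:
  fixes r z X Y Z :: complex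
  assumes "r \<noteq> 0" and "X + Y / r + Z * r = 0" and "z \<noteq> 0"
  shows "z * (X + Y / z + Z * z) = (z - r) * (Z * z + (X + Z * r))"
  unfolding laurent_trinomial_root_coeff[OF assms(1,2)] using assms(3) by (simp add: field_simps)

lemma logderiv_laurent_trinomial:
  fixes r z X Y Z :: complex
  assumes "r \<noteq> 0" and root: "X + Y / r + Z * r = 0"
    and "z \<noteq> 0" and "z \<noteq> r" and "Z * z + (X + Z * r) \<noteq> 0"
  shows "deriv (\<lambda>z. X + Y / z + Z * z) z / (X + Y / z + Z * z)
    = 1 / (z - r) + Z / (Z * z + (X + Z * r)) - 1 / z"
proof -
  define A where "A = z - r"
  define B where "B = Z * z + (X + Z * r)"
  have "A \<noteq> 0" "B \<noteq> 0"
    using assms by (simp_all add: A_def B_def)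
  have "((\<lambda>z. X + Y / z + Z * z) has_field_derivative (Z - Y / z\<^sup>2)) (at z)"
    using \<open>z \<noteq> 0\<close> by (auto intro!: derivative_eq_intros simp: power2_eq_square field_simps)
  then have deriv_eq: "deriv (\<lambda>z. X + Y / z + Z * z) z = Z - Y / z\<^sup>2"
    by (rule DERIV_imp_deriv)
  have trinomial_eq: "X + Y / z + Z * z = A * B / z"
    using laurent_trinomial_root_factor[OF assms(1,2,3)] \<open>z \<noteq> 0\<close>
    by (metis A_def B_def nonzero_mult_div_cancel_left)
  have Y: "Y = - (z - A) * (B - Z * z)"
    using laurent_trinomial_root_coeff[OF assms(1,2)] by (simp add: A_def B_def)
  have "deriv (\<lambda>z. X + Y / z + Z * z) z / (X + Y / z + Z * z)
      = (Z - Y / z\<^sup>2) / (A * B / z)"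
    unfolding deriv_eq trinomial_eq ..
  also have "\<dots> = 1 / A + Z / B - 1 / z"
    unfolding Y using \<open>z \<noteq> 0\<close> \<open>A \<noteq> 0\<close> \<open>B \<noteq> 0\<close> by (simp add: field_simps power2_eq_square)
  finally show ?thesis
    by (simp add: A_def B_def)
qed

lemma winding_number_comp_unit_circlepath:
  assumes analytic: "h analytic_on (- {0})" and nonzero: "\<And>z. cmod z = 1 \<Longrightarrow> h z \<noteq> 0"
    and integral: "((\<lambda>z. deriv h z / h z) has_contour_integral (2 * pi * \<i> * n)) (circlepath 0 1)"
  shows "winding_number (h \<circ> circlepath 0 1) 0 = n"
proof -
  define \<gamma> :: "real \<Rightarrow> complex" where "\<gamma> = circlepath 0 1"
  have valid: "valid_path \<gamma>"
    by (simp add: \<gamma>_def)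
  have subset: "path_image \<gamma> \<subseteq> - {0}"
    by (auto simp: \<gamma>_def)
  have "0 \<notin> path_image (h \<circ> \<gamma>)"
    using nonzero by (auto simp: \<gamma>_def path_image_compose)
  then have "winding_number (h \<circ> \<gamma>) 0 = 1 / (2 * pi * \<i>) * contour_integral (h \<circ> \<gamma>) (\<lambda>w. 1 / (w - 0))"
    by (intro winding_number_valid_path valid_path_compose_analytic[OF valid analytic subset])
  also have "\<dots> = 1 / (2 * pi * \<i>) * contour_integral \<gamma> (\<lambda>z. deriv h z * (1 / (h z - 0)))"
    by (simp only: contour_integral_comp_analyticW[OF analytic valid subset])
  also have "\<dots> = n"
    using contour_integral_unique[OF integral] by (simp add: \<gamma>_def)
  finally show ?thesis
    by (simp add: \<gamma>_def)
qed

lemma has_contour_integral_unit_circlepath_linear: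
  assumes "\<And>z. cmod z = 1 \<Longrightarrow> Z * z + \<beta> \<noteq> 0"
  obtains n where "n \<in> {0, 1}"
    and "((\<lambda>z. Z / (Z * z + \<beta>)) has_contour_integral (2 * pi * \<i> * n)) (circlepath 0 1)"
proof (cases "Z = 0")
  case True
  then show ?thesis
    using that[of 0] has_contour_integral_0[of "circlepath 0 1"] by simp
next
  case False
  define s where "s = - \<beta> / Z"
  have "cmod s \<noteq> 1"
    using assms[of s] False by (auto simp: s_def)
  then have "s \<notin> path_image (circlepath 0 1)"
    by auto
  then have "((\<lambda>z. 1 / (z - s)) has_contour_integral (2 * pi * \<i> * winding_number (circlepath 0 1) s)) (circlepath 0 1)"
    by (intro has_contour_integral_winding_number) simp_all
  then have "((\<lambda>z. Z / (Z * z + \<beta>)) has_contour_integral (2 * pi * \<i> * winding_number (circlepath 0 1) s)) (circlepath 0 1)"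
    by (rule has_contour_integral_eq) (use False assms in \<open>auto simp: s_def field_simps\<close>)
  moreover have "winding_number (circlepath 0 1) s \<in> {0, 1}"
    using \<open>cmod s \<noteq> 1\<close> by (simp add: winding_number_unit_circlepath)
  ultimately show ?thesis
    using that by blast
qed

text \<open>If G has a root r, then z G(z) = (z - r)(Z z + \<beta>), so the logarithmic derivative of G is
  1/(z - r) + Z/(Z z + \<beta>) - 1/z, and on the unit circle the three terms contribute 1, then 0 or 1,
  then -1 to the winding number.\<close>

lemma winding_number_laurent_trinomial_nonneg:
  assumes G: "laurent_trinomial G"
    and nonzero: "\<And>z. cmod z = 1 \<Longrightarrow> G z \<noteq> 0"
    and r: "r \<noteq> 0" "cmod r < 1" "G r = 0"
  shows "Re (winding_number (\<lambda>t. G (cis (2 * pi * t))) 0) \<ge> 0"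
proof -
  obtain X Y Z where GXYZ: "\<And>z. z \<noteq> 0 \<Longrightarrow> G z = X + Y / z + Z * z"
    using G by (auto simp: laurent_trinomial_def)
  define h where "h z = X + Y / z + Z * z" for z
  define \<beta> where "\<beta> = X + Z * r"
  define \<gamma> :: "real \<Rightarrow> complex" where "\<gamma> = circlepath 0 1"
  have root: "X + Y / r + Z * r = 0"
    using GXYZ[OF r(1)] r(3) by simp
  have h_nonzero: "h z \<noteq> 0" and lin_nonzero: "Z * z + \<beta> \<noteq> 0" if "cmod z = 1" for z
  proof -
    have "z \<noteq> 0"
      using that by auto
    then show "h z \<noteq> 0"
      using nonzero[OF that] GXYZ by (simp add: h_def)
    then show "Z * z + \<beta> \<noteq> 0"
      using laurent_trinomial_root_factor[OF r(1) root \<open>z \<noteq> 0\<close>] \<open>z \<noteq> 0\<close> by (auto simp: h_def \<beta>_def)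
  qed
  obtain n where n: "n \<in> {0, 1}" "((\<lambda>z. Z / (Z * z + \<beta>)) has_contour_integral (2 * pi * \<i> * n)) \<gamma>"
    using has_contour_integral_unit_circlepath_linear[OF lin_nonzero] unfolding \<gamma>_def by blast
  have "r \<notin> path_image \<gamma>" and "0 \<notin> path_image \<gamma>"
    using r by (auto simp: \<gamma>_def)
  then have "((\<lambda>z. 1 / (z - r) + Z / (Z * z + \<beta>) - 1 / (z - 0)) has_contour_integral
      (2 * pi * \<i> * winding_number \<gamma> r + 2 * pi * \<i> * n - 2 * pi * \<i> * winding_number \<gamma> 0)) \<gamma>"
    by (intro has_contour_integral_diff has_contour_integral_add n(2) has_contour_integral_winding_number)
       (simp_all add: \<gamma>_def)
  moreover have "winding_number \<gamma> r = 1" and "winding_number \<gamma> 0 = 1"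
    using r by (simp_all add: \<gamma>_def winding_number_unit_circlepath)
  ultimately have "((\<lambda>z. 1 / (z - r) + Z / (Z * z + \<beta>) - 1 / (z - 0)) has_contour_integral (2 * pi * \<i> * n)) \<gamma>"
    by simp
  then have "((\<lambda>z. deriv h z / h z) has_contour_integral (2 * pi * \<i> * n)) \<gamma>"
  proof (rule has_contour_integral_eq)
    fix z
    assume "z \<in> path_image \<gamma>"
    then have "cmod z = 1"
      by (simp add: \<gamma>_def)
    then have "z \<noteq> 0" and "z \<noteq> r"
      using r(2) by auto
    then show "1 / (z - r) + Z / (Z * z + \<beta>) - 1 / (z - 0) = deriv h z / h z"
      using logderiv_laurent_trinomial[OF r(1) root \<open>z \<noteq> 0\<close> \<open>z \<noteq> r\<close>] lin_nonzero[OF \<open>cmod z = 1\<close>]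
      by (simp add: h_def[abs_def] \<beta>_def)
  qed
  then have "winding_number (h \<circ> \<gamma>) 0 = n"
    unfolding \<gamma>_def by (intro winding_number_comp_unit_circlepath h_nonzero) (auto simp: h_def[abs_def] intro!: analytic_intros)
  moreover have "(\<lambda>t. G (cis (2 * pi * t))) = h \<circ> \<gamma>"
    by (auto simp: \<gamma>_def circlepath cis_conv_exp h_def GXYZ mult_ac)
  ultimately show ?thesis
    using n(1) by auto
qed

section \<open>The transfer recurrence and the Floquet multipliers\<close>

locale ktoeplitz_data =
  fixes k :: nat and a b c :: "nat \<Rightarrow> complex" and lam :: complex
  assumes k_pos: "k \<ge> 1"
    and b_nonzero: "\<And>j. 1 \<le> j \<Longrightarrow> j \<le> k \<Longrightarrow> b j \<noteq> 0"
begin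

abbreviation P :: "nat \<Rightarrow> nat" where
  "P \<equiv> period_index k"

lemma period_index_in: "P n \<in> {1..k}"
  using k_pos by (auto simp: period_index_def Suc_le_eq)

lemma period_index_0: "P 0 = 1"
  by (simp add: period_index_def)

lemma period_index_add_mult: "P (n + m * k) = P n"
  by (simp add: period_index_def)

lemma period_index_add_k: "i < k \<Longrightarrow> P (k + i) = Suc i"
  by (simp add: period_index_def)

lemma period_index_add_k_minus_1: "i < k \<Longrightarrow> P (k + i - 1) = (if i = 0 then k else i)"
  using k_pos by (cases i) (simp_all add: period_index_def)

lemma b_period_index_nonzero: "b (P n) \<noteq> 0"
  using period_index_in[of n] by (intro b_nonzero) auto

definition Tlam :: "(nat \<Rightarrow> complex) \<Rightarrow> nat \<Rightarrow> complex" where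
  "Tlam x = (\<lambda>n. ktoeplitz k a b c x n - lam * x n)"

lemma Tlam_0: "Tlam x 0 = (a 1 - lam) * x 0 + b 1 * x 1"
  by (simp add: Tlam_def ktoeplitz_def period_index_0 algebra_simps)

lemma Tlam_Suc:
  "Tlam x (Suc n) = c (P n) * x n + (a (P (Suc n)) - lam) * x (Suc n) + b (P (Suc n)) * x (Suc (Suc n))"
  by (simp add: Tlam_def ktoeplitz_def algebra_simps)

lemma Tlam_eq:
  "Tlam x n = (if n = 0 then 0 else c (P (n - 1)) * x (n - 1)) + (a (P n) - lam) * x n + b (P n) * x (Suc n)"
  by (simp add: Tlam_def ktoeplitz_def algebra_simps)

lemma Tlam_diff: "Tlam (\<lambda>n. x n - y n) n = Tlam x n - Tlam y n"
  by (simp add: Tlam_def ktoeplitz_def algebra_simps)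

lemma ess_spectrum_iff: "lam \<in> ess_spectrum_ktoeplitz k a b c \<longleftrightarrow> \<not> fredholm_l2 Tlam"
  by (simp add: ess_spectrum_ktoeplitz_def Tlam_def[abs_def])

lemma Tlam_Suc_eq_0_iff:
  "Tlam x (Suc n) = 0 \<longleftrightarrow>
     x (Suc (Suc n)) = - (c (P n) * x n + (a (P (Suc n)) - lam) * x (Suc n)) / b (P (Suc n))"
  using b_period_index_nonzero[of "Suc n"]
  by (auto simp: Tlam_Suc field_simps add_eq_0_iff2)

text \<open>rec_sol p q solves every row of (T(f) - \<lambda>) x = 0 except row 0, with x 0 = p and
  x 1 = q.\<close>

fun rec_sol :: "complex \<Rightarrow> complex \<Rightarrow> nat \<Rightarrow> complex" where
  "rec_sol p q 0 = p"
| "rec_sol p q (Suc 0) = q"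
| "rec_sol p q (Suc (Suc n)) =
     - (c (P n) * rec_sol p q n + (a (P (Suc n)) - lam) * rec_sol p q (Suc n)) / b (P (Suc n))"

lemma Tlam_rec_sol: "Tlam (rec_sol p q) (Suc n) = 0"
  by (simp add: Tlam_Suc_eq_0_iff)

lemma rec_sol_unique:
  assumes "\<And>n. Tlam x (Suc n) = 0"
  shows "rec_sol (x 0) (x 1) n = x n"
proof -
  have "rec_sol (x 0) (x 1) n = x n \<and> rec_sol (x 0) (x 1) (Suc n) = x (Suc n)"
    by (induction n) (use assms in \<open>simp_all add: Tlam_Suc_eq_0_iff\<close>)
  then show ?thesis ..
qed

lemma rec_sol_linear: "rec_sol p q n = p * rec_sol 1 0 n + q * rec_sol 0 1 n"
proof (induction p q n rule: rec_sol.induct)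
  case (3 p q n)
  show ?case
    by (simp only: rec_sol.simps 3) (simp add: divide_inverse algebra_simps)
qed simp_all

lemma rec_sol_add_mult:
  "rec_sol p q (n + m * k) = rec_sol (rec_sol p q (m * k)) (rec_sol p q (Suc (m * k))) n"
proof -
  have "rec_sol p q (n + m * k) = rec_sol (rec_sol p q (m * k)) (rec_sol p q (Suc (m * k))) n \<and>
    rec_sol p q (Suc n + m * k) = rec_sol (rec_sol p q (m * k)) (rec_sol p q (Suc (m * k))) (Suc n)"
  proof (induction n)
    case (Suc n)
    then show ?case
      using period_index_add_mult[of n m] period_index_add_mult[of "Suc n" m]
      by (simp del: rec_sol.simps(3) add: rec_sol.simps(3)[of _ _ "n + m * k"] rec_sol.simps(3)[of _ _ n])
  qed simp
  then show ?thesis ..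
qed

definition "mon11 = rec_sol 1 0 k"
definition "mon12 = rec_sol 0 1 k"
definition "mon21 = rec_sol 1 0 (Suc k)"
definition "mon22 = rec_sol 0 1 (Suc k)"
definition "mon_tr = mon11 + mon22"
definition "mon_det = mon11 * mon22 - mon12 * mon21"

text \<open>The Floquet multipliers are the eigenvalues of the monodromy matrix
  [[mon11, mon12], [mon21, mon22]], which maps (x 0, x 1) to (x k, x (k + 1)) for solutions x.\<close>

definition floquet :: "complex \<Rightarrow> bool" where
  "floquet \<mu> \<longleftrightarrow> \<mu> * \<mu> - mon_tr * \<mu> + mon_det = 0"

lemma rec_sol_add_period:
  "rec_sol p q (n + k) = rec_sol (mon11 * p + mon12 * q) (mon21 * p + mon22 * q) n"
  using rec_sol_add_mult[of p q n 1] rec_sol_linear[of p q k] rec_sol_linear[of p q "Suc k"]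
  by (simp add: mon11_def mon12_def mon21_def mon22_def mult.commute)

lemma rec_sol_block_recurrence:
  "rec_sol p q (Suc (Suc m) * k + r) = mon_tr * rec_sol p q (Suc m * k + r) - mon_det * rec_sol p q (m * k + r)"
proof -
  define A where "A m = rec_sol p q (m * k)" for m
  define B where "B m = rec_sol p q (Suc (m * k))" for m
  have A: "A (Suc m) = mon11 * A m + mon12 * B m" and B: "B (Suc m) = mon21 * A m + mon22 * B m" for m
    using rec_sol_add_period[of "A m" "B m" 0] rec_sol_add_period[of "A m" "B m" 1]
      rec_sol_add_mult[of p q 0 m] rec_sol_add_mult[of p q k m] rec_sol_add_mult[of p q 1 m]
      rec_sol_add_mult[of p q "Suc k" m]
    by (simp_all add: A_def B_def add.commute)
  have block: "rec_sol p q (m * k + r) = A m * rec_sol 1 0 r + B m * rec_sol 0 1 r" for m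
    using rec_sol_add_mult[of p q r m] rec_sol_linear[of "A m" "B m" r] by (simp add: A_def B_def add.commute)
  show ?thesis
    unfolding block A B mon_tr_def mon_det_def by (simp add: algebra_simps)
qed

lemma floquet_roots: "\<exists>\<mu> \<nu>. mon_tr = \<mu> + \<nu> \<and> mon_det = \<mu> * \<nu>"
proof -
  define s where "s = csqrt (mon_tr\<^sup>2 - 4 * mon_det)"
  have "s\<^sup>2 = mon_tr\<^sup>2 - 4 * mon_det"
    by (simp add: s_def)
  then have "mon_tr = (mon_tr + s) / 2 + (mon_tr - s) / 2 \<and> mon_det = (mon_tr + s) / 2 * ((mon_tr - s) / 2)"
    by (simp add: field_simps power2_eq_square)
  then show ?thesis
    by blast
qed

lemma floquet_root: "mon_tr = \<mu> + \<nu> \<Longrightarrow> mon_det = \<mu> * \<nu> \<Longrightarrow> floquet \<mu>"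
  by (simp add: floquet_def algebra_simps)

lemma floquet_iff_eigenvector:
  "floquet \<mu> \<longleftrightarrow> (\<exists>p q. (p \<noteq> 0 \<or> q \<noteq> 0) \<and> mon11 * p + mon12 * q = \<mu> * p \<and> mon21 * p + mon22 * q = \<mu> * q)"
proof
  assume \<mu>: "floquet \<mu>"
  have char: "mon21 * mon12 = (\<mu> - mon11) * (\<mu> - mon22)"
    using \<mu> by (simp add: floquet_def mon_tr_def mon_det_def algebra_simps)
  consider "mon12 \<noteq> 0 \<or> \<mu> \<noteq> mon11" | "mon21 \<noteq> 0 \<or> \<mu> \<noteq> mon22" | "mon12 = 0 \<and> \<mu> = mon11 \<and> mon21 = 0 \<and> \<mu> = mon22"
    by blast
  then show "\<exists>p q. (p \<noteq> 0 \<or> q \<noteq> 0) \<and> mon11 * p + mon12 * q = \<mu> * p \<and> mon21 * p + mon22 * q = \<mu> * q"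
  proof cases
    case 1
    then show ?thesis
      using char by (intro exI[of _ mon12] exI[of _ "\<mu> - mon11"]) (auto simp: algebra_simps)
  next
    case 2
    then show ?thesis
      using char by (intro exI[of _ "\<mu> - mon22"] exI[of _ mon21]) (auto simp: algebra_simps)
  next
    case 3
    then show ?thesis
      by (intro exI[of _ 1] exI[of _ 0]) simp
  qed
next
  assume "\<exists>p q. (p \<noteq> 0 \<or> q \<noteq> 0) \<and> mon11 * p + mon12 * q = \<mu> * p \<and> mon21 * p + mon22 * q = \<mu> * q"
  then obtain p q where pq: "p \<noteq> 0 \<or> q \<noteq> 0" "mon11 * p + mon12 * q = \<mu> * p" "mon21 * p + mon22 * q = \<mu> * q"
    by blast
  define D where "D = \<mu> * \<mu> - mon_tr * \<mu> + mon_det"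
  have "D * p = (mon22 - \<mu>) * (mon11 * p + mon12 * q - \<mu> * p) - mon12 * (mon21 * p + mon22 * q - \<mu> * q)"
    and "D * q = (mon11 - \<mu>) * (mon21 * p + mon22 * q - \<mu> * q) - mon21 * (mon11 * p + mon12 * q - \<mu> * p)"
    by (simp_all add: D_def mon_tr_def mon_det_def algebra_simps)
  then have "D * p = 0" "D * q = 0"
    using pq by simp_all
  then show "floquet \<mu>"
    using pq(1) by (auto simp: floquet_def D_def)
qed

lemma rec_sol_bloch:
  assumes "mon11 * p + mon12 * q = \<mu> * p" and "mon21 * p + mon22 * q = \<mu> * q"
  shows "rec_sol p q (n + k) = \<mu> * rec_sol p q n"
proof -
  have "rec_sol p q (n + k) = rec_sol (\<mu> * p) (\<mu> * q) n"
    by (simp only: rec_sol_add_period assms)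
  also have "\<dots> = \<mu> * rec_sol p q n"
    using rec_sol_linear[of "\<mu> * p" "\<mu> * q" n] rec_sol_linear[of p q n] by (simp add: algebra_simps)
  finally show ?thesis .
qed

lemma bloch_add_mult:
  fixes \<phi> :: "nat \<Rightarrow> complex"
  assumes "\<And>n. \<phi> (n + k) = \<mu> * \<phi> n"
  shows "\<phi> (n + m * k) = \<mu> ^ m * \<phi> n"
proof (induction m)
  case (Suc m)
  have "\<phi> (n + Suc m * k) = \<phi> ((n + m * k) + k)"
    by (simp add: algebra_simps)
  also have "\<dots> = \<mu> * \<phi> (n + m * k)"
    by (rule assms)
  finally show ?case
    by (simp add: Suc.IH mult.assoc)
qed simp

lemma floquet_imp_bloch_solution:
  assumes "floquet \<mu>"
  obtains \<phi> r where "\<And>n. Tlam \<phi> (Suc n) = 0" and "\<And>n. \<phi> (n + k) = \<mu> * \<phi> n"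
    and "r < k" and "\<phi> r \<noteq> 0"
proof -
  obtain p q where pq: "p \<noteq> 0 \<or> q \<noteq> 0" "mon11 * p + mon12 * q = \<mu> * p" "mon21 * p + mon22 * q = \<mu> * q"
    using assms floquet_iff_eigenvector by blast
  have shift: "rec_sol p q (n + k) = \<mu> * rec_sol p q n" for n
    using rec_sol_bloch[OF pq(2,3)] .
  have "\<exists>r<k. rec_sol p q r \<noteq> 0"
  proof (cases "p = 0")
    case True
    with pq(1) have "q \<noteq> 0" by simp
    have "k \<noteq> 1"
    proof
      assume "k = 1"
      then have "0 + k = Suc 0" by simp
      then have "rec_sol p q (Suc 0) = \<mu> * rec_sol p q 0"
        using shift[of 0] by (simp only:)
      with True \<open>q \<noteq> 0\<close> show False by simp
    qed
    with k_pos \<open>q \<noteq> 0\<close> show ?thesis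
      by (intro exI[of _ 1]) simp
  next
    case False
    then show ?thesis
      using k_pos by (intro exI[of _ 0]) simp
  qed
  then show ?thesis
    using that[of "rec_sol p q"] Tlam_rec_sol shift by blast
qed

lemma bloch_solution_imp_floquet:
  assumes rows: "\<And>n. Tlam \<psi> (Suc n) = 0" and shift: "\<And>n. \<psi> (n + k) = \<mu> * \<psi> n"
    and "\<psi> r \<noteq> 0"
  shows "floquet \<mu>"
proof -
  have \<psi>: "rec_sol (\<psi> 0) (\<psi> (Suc 0)) n = \<psi> n" for n
    using rec_sol_unique[OF rows] by simp
  have "mon11 * \<psi> 0 + mon12 * \<psi> 1 = \<mu> * \<psi> 0" "mon21 * \<psi> 0 + mon22 * \<psi> 1 = \<mu> * \<psi> 1"
    using rec_sol_add_period[of "\<psi> 0" "\<psi> 1" 0] rec_sol_add_period[of "\<psi> 0" "\<psi> 1" 1]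
      shift[of 0] shift[of 1] by (simp_all add: \<psi>)
  moreover have "\<psi> 0 \<noteq> 0 \<or> \<psi> 1 \<noteq> 0"
    using \<psi>[of r] rec_sol_linear[of 0 0 r] \<open>\<psi> r \<noteq> 0\<close> by auto
  ultimately show ?thesis
    using floquet_iff_eigenvector by blast
qed

section \<open>Multipliers inside the unit disc give a decaying eigenvector\<close>

definition "eig_sol = rec_sol 1 (- (a 1 - lam) / b 1)"

lemma eig_sol_0: "eig_sol 0 = 1"
  by (simp add: eig_sol_def)

lemma Tlam_eig_sol: "Tlam eig_sol n = 0"
proof (cases n)
  case 0
  have "b 1 \<noteq> 0"
    using b_period_index_nonzero[of 0] by (simp add: period_index_0)
  then show ?thesis
    using 0 by (simp add: Tlam_0 eig_sol_def)
qed (simp add: eig_sol_def Tlam_rec_sol)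

lemma ktoeplitz_eig_sol: "ktoeplitz k a b c eig_sol = (\<lambda>n. lam * eig_sol n)"
  using Tlam_eig_sol by (auto simp: Tlam_def)

lemma Tlam_eq_0_imp_eig_sol:
  assumes "Tlam z = (\<lambda>_. 0)"
  shows "z n = z 0 * eig_sol n"
proof -
  have "b 1 \<noteq> 0"
    using b_period_index_nonzero[of 0] by (simp add: period_index_0)
  then have "z 1 = - (a 1 - lam) / b 1 * z 0"
    using fun_cong[OF assms, of 0] by (simp add: Tlam_0 field_simps add_eq_0_iff2)
  then show ?thesis
    using rec_sol_unique[of z n] assms rec_sol_linear[of "z 0" "z 1" n]
      rec_sol_linear[of 1 "- (a 1 - lam) / b 1" n]
    by (simp add: eig_sol_def algebra_simps)
qed

lemma eig_sol_block_bound: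
  assumes "mon_tr = \<mu> + \<nu>" "mon_det = \<mu> * \<nu>" and "cmod \<mu> \<le> \<rho>" "cmod \<nu> \<le> \<rho>" and "0 < \<rho>"
  obtains K where "K > 0" and "\<And>n. cmod (eig_sol n) \<le> K * (real (n div k) + 1) * \<rho> ^ (n div k)"
proof -
  define K\<^sub>r where "K\<^sub>r r = cmod (eig_sol r) + cmod (eig_sol (k + r) - \<nu> * eig_sol r) / \<rho>" for r
  define K where "K = (\<Sum>r<k. K\<^sub>r r) + 1"
  have K\<^sub>r_nonneg: "0 \<le> K\<^sub>r r" for r
    using \<open>0 < \<rho>\<close> by (simp add: K\<^sub>r_def)
  have "cmod (eig_sol n) \<le> K * (real (n div k) + 1) * \<rho> ^ (n div k)" for n
  proof -
    define r where "r = n mod k"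
    have "r < k"
      using k_pos by (simp add: r_def)
    then have "K\<^sub>r r \<le> (\<Sum>r<k. K\<^sub>r r)"
      by (intro member_le_sum) (auto intro: K\<^sub>r_nonneg)
    then have "K\<^sub>r r \<le> K"
      by (simp add: K_def)
    have "\<And>m. eig_sol (Suc (Suc m) * k + r) = (\<mu> + \<nu>) * eig_sol (Suc m * k + r) - \<mu> * \<nu> * eig_sol (m * k + r)"
      unfolding eig_sol_def rec_sol_block_recurrence assms(1,2) ..
    from linear_recurrence2_norm_le[where Y = "\<lambda>m. eig_sol (m * k + r)", OF this assms(3,4,5), of "n div k"]
    have "cmod (eig_sol n) \<le> K\<^sub>r r * (real (n div k) + 1) * \<rho> ^ (n div k)"
      by (simp add: K\<^sub>r_def r_def add.commute)
    also have "\<dots> \<le> K * (real (n div k) + 1) * \<rho> ^ (n div k)"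
      using \<open>K\<^sub>r r \<le> K\<close> \<open>0 < \<rho>\<close> by (intro mult_right_mono) auto
    finally show ?thesis .
  qed
  moreover have "K > 0"
    unfolding K_def using K\<^sub>r_nonneg by (simp add: add_nonneg_pos sum_nonneg)
  ultimately show ?thesis
    using that by blast
qed

lemma eigenvector_decay:
  assumes "mon_tr = \<mu> + \<nu>" "mon_det = \<mu> * \<nu>" and "cmod \<mu> < 1" "cmod \<nu> < 1"
  shows "\<exists>C>0. \<exists>x \<rho>. is_l2 x \<and> x \<noteq> (\<lambda>_. 0) \<and> ktoeplitz k a b c x = (\<lambda>n. lam * x n) \<and>
           0 \<le> \<rho> \<and> \<rho> < 1 \<and>
           (\<forall>j::nat. j \<ge> 1 \<longrightarrow>
              cmod (x (j - 1)) / (SUP i. cmod (x i))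
                \<le> C * real_of_int \<lceil>real j / real k\<rceil> * \<rho> ^ (nat \<lceil>real j / real k\<rceil> - 1))"
proof -
  define \<rho> where "\<rho> = max (max (cmod \<mu>) (cmod \<nu>)) (1 / 2)"
  have \<rho>: "0 < \<rho>" "\<rho> < 1" "cmod \<mu> \<le> \<rho>" "cmod \<nu> \<le> \<rho>"
    using assms by (auto simp: \<rho>_def)
  obtain K where K: "K > 0" "\<And>n. cmod (eig_sol n) \<le> K * (real (n div k) + 1) * \<rho> ^ (n div k)"
    using eig_sol_block_bound[OF assms(1,2) \<rho>(3,4,1)] by blast
  have l2: "is_l2 eig_sol"
    using is_l2_of_block_bound[OF K(2)] \<rho> k_pos by simp
  have "cmod (eig_sol (j - 1)) / (SUP i. cmod (eig_sol i))
          \<le> K * real_of_int \<lceil>real j / real k\<rceil> * \<rho> ^ (nat \<lceil>real j / real k\<rceil> - 1)"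
    if "j \<ge> 1" for j
  proof -
    obtain n where j: "j = Suc n"
      using \<open>j \<ge> 1\<close> by (cases j) auto
    then have ceiling: "\<lceil>real j / real k\<rceil> = int (n div k + 1)"
      using ceiling_Suc_div[OF k_pos] by simp
    have ceiling_real: "real_of_int \<lceil>real j / real k\<rceil> = real (n div k) + 1"
      and ceiling_nat: "nat \<lceil>real j / real k\<rceil> - 1 = n div k"
      by (simp_all only: ceiling nat_int)
    have "cmod (eig_sol (j - 1)) / (SUP i. cmod (eig_sol i)) \<le> cmod (eig_sol n)"
      using norm_div_SUP_le[OF l2 eig_sol_0] j by simp
    also have "\<dots> \<le> K * (real (n div k) + 1) * \<rho> ^ (n div k)"
      by (rule K(2))
    finally show ?thesis
      unfolding ceiling_real ceiling_nat .
  qed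
  moreover have "eig_sol \<noteq> (\<lambda>_. 0)"
    using eig_sol_0 by auto
  ultimately show ?thesis
    using K(1) l2 \<rho> ktoeplitz_eig_sol by (intro exI[of _ K] conjI exI[of _ eig_sol] exI[of _ \<rho>]) auto
qed

section \<open>Unimodular multipliers lie in the essential spectrum\<close>

lemma bloch_norm_le:
  assumes "\<And>n. \<phi> (n + k) = \<mu> * \<phi> n" and "cmod \<mu> = 1"
  shows "cmod (\<phi> n) \<le> (\<Sum>r<k. cmod (\<phi> r))"
proof -
  have "cmod (\<phi> n) = cmod (\<phi> (n mod k))"
    using bloch_add_mult[of \<phi> \<mu>, OF assms(1), of "n mod k" "n div k"] assms(2) by (simp add: norm_mult norm_power)
  also have "\<dots> \<le> (\<Sum>r<k. cmod (\<phi> r))"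
    using k_pos by (intro member_le_sum) auto
  finally show ?thesis .
qed

definition "coeff_bound = (\<Sum>j=1..k. cmod (b j) + cmod (c j))"

lemma norm_b_le_coeff_bound: "cmod (b (P n)) \<le> coeff_bound"
  and norm_c_le_coeff_bound: "cmod (c (P n)) \<le> coeff_bound"
proof -
  have "cmod (b (P n)) + cmod (c (P n)) \<le> coeff_bound"
    unfolding coeff_bound_def by (rule member_le_sum[OF period_index_in]) simp_all
  then show "cmod (b (P n)) \<le> coeff_bound" "cmod (c (P n)) \<le> coeff_bound"
    using norm_ge_zero[of "b (P n)"] norm_ge_zero[of "c (P n)"] by linarith+
qed

lemma coeff_bound_nonneg: "0 \<le> coeff_bound"
  using norm_b_le_coeff_bound[of 0] norm_ge_zero order_trans by blast

lemma Tlam_truncate_diff_le: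
  "cmod (Tlam (\<lambda>n. if n < N then Y n else 0) n - Tlam Y n)
     \<le> (if N \<le> n then cmod (Tlam Y n) else 0)
       + (if n = N \<or> Suc n = N then coeff_bound * (cmod (Y (N - 1)) + cmod (Y N)) else 0)"
proof -
  define x where "x n = (if n < N then Y n else 0)" for n
  have cb: "0 \<le> coeff_bound * cmod (Y (N - 1))" "0 \<le> coeff_bound * cmod (Y N)"
    using coeff_bound_nonneg by simp_all
  consider "Suc n < N" | "Suc n = N" | "n = N" | "N < n"
    by linarith
  then have "cmod (Tlam x n - Tlam Y n) \<le> (if N \<le> n then cmod (Tlam Y n) else 0)
       + (if n = N \<or> Suc n = N then coeff_bound * (cmod (Y (N - 1)) + cmod (Y N)) else 0)"
  proof cases
    case 1
    then have "Tlam x n = Tlam Y n"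
      by (simp add: Tlam_eq x_def)
    then show ?thesis
      using 1 by simp
  next
    case 2
    then have "cmod (Tlam x n - Tlam Y n) = cmod (b (P n)) * cmod (Y N)"
      by (simp add: Tlam_eq x_def norm_mult)
    also have "\<dots> \<le> coeff_bound * cmod (Y N)"
      by (intro mult_right_mono norm_b_le_coeff_bound) simp
    finally show ?thesis
      using 2 cb by (simp add: distrib_left)
  next
    case 3
    then have "Tlam x n - Tlam Y n = (if N = 0 then 0 else c (P (N - 1)) * Y (N - 1)) - Tlam Y n"
      by (simp add: Tlam_eq x_def)
    moreover have "cmod (c (P (N - 1)) * Y (N - 1)) \<le> coeff_bound * cmod (Y (N - 1))"
      unfolding norm_mult by (intro mult_right_mono norm_c_le_coeff_bound) simp
    ultimately show ?thesis
      using 3 cb norm_triangle_ineq4[of "c (P (N - 1)) * Y (N - 1)" "Tlam Y n"]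
      by (auto simp: algebra_simps)
  next
    case 4
    then have "Tlam x n = 0"
      by (simp add: Tlam_eq x_def)
    then show ?thesis
      using 4 by simp
  qed
  then show ?thesis
    by (simp add: x_def[abs_def])
qed

text \<open>Truncations show that Tlam Y lies in the l2-closure of the range whenever Y tends to zero.\<close>

lemma closed_range_imp_Tlam_in_range:
  assumes closed: "l2_closed (Tlam ` {x. is_l2 x})" and Y: "Y \<longlonglongrightarrow> 0" and l2: "is_l2 (Tlam Y)"
  shows "Tlam Y \<in> Tlam ` {x. is_l2 x}"
proof -
  define YN where "YN N n = (if n < N then Y n else 0)" for N n
  have "is_l2 (YN N)" for N
    by (rule is_l2_finite_support[of N]) (simp add: YN_def)
  moreover have "is_l2 (Tlam (YN N))" for N
    by (rule is_l2_finite_support[of "Suc N"]) (simp add: Tlam_eq YN_def)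
  moreover have "(\<lambda>N. coeff_bound * (cmod (Y (N - 1)) + cmod (Y N))) \<longlonglongrightarrow> coeff_bound * (cmod (0::complex) + cmod (0::complex))"
    by (intro tendsto_intros Y filterlim_compose[OF Y filterlim_minus_const_nat_at_top])
  then have "(\<lambda>N. l2norm (\<lambda>n. Tlam (YN N) n - Tlam Y n)) \<longlonglongrightarrow> 0"
    unfolding YN_def by (intro l2norm_LIMSEQ_zero_of_tail_bound[OF Tlam_truncate_diff_le l2]) simp
  ultimately show ?thesis
    using closed l2 unfolding l2_closed_def
    by (elim allE[of _ "\<lambda>N. Tlam (YN N)"] allE[of _ "Tlam Y"]) blast
qed

definition damped :: "(nat \<Rightarrow> complex) \<Rightarrow> nat \<Rightarrow> complex" where
  "damped \<phi> n = complex_of_real (damp (n div k)) * \<phi> n"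

lemma damped_LIMSEQ_zero:
  assumes "\<And>n. cmod (\<phi> n) \<le> M"
  shows "damped \<phi> \<longlonglongrightarrow> 0"
proof (rule Lim_null_comparison)
  show "\<forall>\<^sub>F n in sequentially. norm (damped \<phi> n) \<le> damp (n div k) * M"
    using assms damp_nonneg by (intro always_eventually allI) (simp add: damped_def norm_mult mult_left_mono)
  have "(\<lambda>n. damp (n div k)) \<longlonglongrightarrow> 0"
    using filterlim_compose[OF damp_LIMSEQ_zero filterlim_at_top_div_const_nat] k_pos by simp
  then show "(\<lambda>n. damp (n div k) * M) \<longlonglongrightarrow> 0"
    using tendsto_mult[OF _ tendsto_const[of M]] by fastforce
qed

text \<open>The damping factor varies by a square-summable amount from one period to the next, so
  applying Tlam to a damped solution leaves an l2 remainder.\<close>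

lemma Tlam_damped_Suc:
  assumes "Tlam \<phi> (Suc n) = 0"
  shows "Tlam (damped \<phi>) (Suc n)
    = c (P n) * complex_of_real (damp (n div k) - damp (Suc n div k)) * \<phi> n
      + b (P (Suc n)) * complex_of_real (damp (Suc (Suc n) div k) - damp (Suc n div k)) * \<phi> (Suc (Suc n))"
proof -
  have "Tlam (damped \<phi>) (Suc n) = Tlam (damped \<phi>) (Suc n) - complex_of_real (damp (Suc n div k)) * Tlam \<phi> (Suc n)"
    using assms by simp
  then show ?thesis
    by (simp add: Tlam_Suc damped_def algebra_simps)
qed

lemma is_l2_Tlam_damped:
  assumes rows: "\<And>n. Tlam \<phi> (Suc n) = 0" and bound: "\<And>n. cmod (\<phi> n) \<le> M"
  shows "is_l2 (Tlam (damped \<phi>))"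
proof -
  define \<delta> where "\<delta> n = damp (n div k) - damp (Suc (n div k))" for n
  have M: "0 \<le> M"
    using bound[of 0] norm_ge_zero order_trans by blast
  have \<delta>: "0 \<le> \<delta> n" "\<bar>damp (n div k) - damp (Suc n div k)\<bar> \<le> \<delta> n" for n
    using damp_Suc_le[of "n div k"] damp_div_diff_le[of n k] by (simp_all add: \<delta>_def)
  have summable_\<delta>: "summable (\<lambda>n. (coeff_bound * \<delta> n * M)\<^sup>2)"
    unfolding \<delta>_def power_mult_distrib
    by (intro summable_mult summable_mult2 summable_comp_div[OF summable_damp_diff_sq]) (use k_pos in auto)
  have "is_l2 (\<lambda>n. c (P n) * complex_of_real (damp (n div k) - damp (Suc n div k)) * \<phi> n)"
  proof (rule is_l2_norm_le[OF _ summable_\<delta>])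
    show "cmod (c (P n) * complex_of_real (damp (n div k) - damp (Suc n div k)) * \<phi> n) \<le> coeff_bound * \<delta> n * M" for n
      unfolding norm_mult norm_of_real
      by (intro mult_mono norm_c_le_coeff_bound \<delta> bound) (use coeff_bound_nonneg M \<delta> in auto)
  qed
  moreover have "is_l2 (\<lambda>n. b (P (Suc n)) * complex_of_real (damp (Suc (Suc n) div k) - damp (Suc n div k)) * \<phi> (Suc (Suc n)))"
  proof (rule is_l2_norm_le)
    show "cmod (b (P (Suc n)) * complex_of_real (damp (Suc (Suc n) div k) - damp (Suc n div k)) * \<phi> (Suc (Suc n)))
        \<le> coeff_bound * \<delta> (Suc n) * M" for n
      unfolding norm_mult norm_of_real using \<delta>(2)[of "Suc n"]
      by (intro mult_mono norm_b_le_coeff_bound bound) (auto simp: abs_minus_commute coeff_bound_nonneg M \<delta>)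
    show "summable (\<lambda>n. (coeff_bound * \<delta> (Suc n) * M)\<^sup>2)"
      using summable_\<delta> by (subst summable_Suc_iff)
  qed
  ultimately have "is_l2 (\<lambda>n. Tlam (damped \<phi>) (Suc n))"
    unfolding Tlam_damped_Suc[OF rows] by (rule is_l2_add)
  then show ?thesis
    by (simp add: is_l2_Suc_iff)
qed

text \<open>An l2 preimage x of the damped Bloch solution would differ from it by a multiple t of
  eig_sol; then t eig_sol tends to zero, hence is l2 along a residue class modulo k, and so would
  be the damped solution, whose modulus there is |\<phi> r| damp m.\<close>

lemma damped_bloch_not_in_range:
  assumes "floquet \<mu>" and "cmod \<mu> = 1"
    and rows: "\<And>n. Tlam \<phi> (Suc n) = 0" and shift: "\<And>n. \<phi> (n + k) = \<mu> * \<phi> n"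
    and "r < k" and "\<phi> r \<noteq> 0" and bound: "\<And>n. cmod (\<phi> n) \<le> M"
  shows "Tlam (damped \<phi>) \<notin> Tlam ` {x. is_l2 x}"
proof
  assume "Tlam (damped \<phi>) \<in> Tlam ` {x. is_l2 x}"
  then obtain x where x: "is_l2 x" "Tlam x = Tlam (damped \<phi>)"
    by auto
  define t where "t = damped \<phi> 0 - x 0"
  have "Tlam (\<lambda>n. damped \<phi> n - x n) = (\<lambda>_. 0)"
    using x(2) by (intro ext) (simp add: Tlam_diff)
  then have x_eq: "damped \<phi> n - x n = t * eig_sol n" for n
    using Tlam_eq_0_imp_eig_sol by (simp add: t_def)
  define U where "U m = t * eig_sol (m * k + r)" for m
  define \<nu> where "\<nu> = mon_tr - \<mu>"
  have "mon_tr = \<mu> + \<nu>" and "mon_det = \<mu> * \<nu>"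
    using \<open>floquet \<mu>\<close> by (simp_all add: \<nu>_def floquet_def algebra_simps eq_diff_eq)
  then have rec: "U (Suc (Suc m)) = (\<mu> + \<nu>) * U (Suc m) - \<mu> * \<nu> * U m" for m
    unfolding U_def eig_sol_def rec_sol_block_recurrence by (simp add: algebra_simps)
  have "strict_mono (\<lambda>m. m * k + r)"
    using k_pos by (intro strict_monoI) simp
  moreover have "(\<lambda>n. damped \<phi> n - x n) \<longlonglongrightarrow> 0 - 0"
    by (intro tendsto_diff damped_LIMSEQ_zero[of \<phi> M] bound is_l2_imp_LIMSEQ_zero x(1))
  ultimately have "(\<lambda>m. damped \<phi> (m * k + r) - x (m * k + r)) \<longlonglongrightarrow> 0"
    using LIMSEQ_subseq_LIMSEQ by (fastforce simp: o_def)
  then have "U \<longlonglongrightarrow> 0"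
    by (simp add: U_def[abs_def] x_eq)
  with rec have "is_l2 U"
    using linear_recurrence2_unimodular_is_l2 \<open>cmod \<mu> = 1\<close> by blast
  then have "is_l2 (\<lambda>m. x (m * k + r) + U m)"
    using is_l2_add is_l2_comp_affine[OF x(1) k_pos] by blast
  moreover have "x (m * k + r) + U m = damped \<phi> (m * k + r)" for m
    by (simp add: U_def flip: x_eq)
  moreover have "cmod (damped \<phi> (m * k + r)) = cmod (\<phi> r) * damp m" for m
    using bloch_add_mult[of \<phi> \<mu>, OF shift, of r m] \<open>r < k\<close> \<open>cmod \<mu> = 1\<close> damp_nonneg[of m]
    by (simp add: damped_def norm_mult norm_power add.commute)
  ultimately show False
    using not_is_l2_damped[of "\<lambda>m. damped \<phi> (m * k + r)" "cmod (\<phi> r)"] \<open>\<phi> r \<noteq> 0\<close> by simp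
qed

lemma unimodular_floquet_imp_ess_spectrum:
  assumes "floquet \<mu>" and "cmod \<mu> = 1"
  shows "lam \<in> ess_spectrum_ktoeplitz k a b c"
proof -
  obtain \<phi> r where \<phi>: "\<And>n. Tlam \<phi> (Suc n) = 0" "\<And>n. \<phi> (n + k) = \<mu> * \<phi> n" "r < k" "\<phi> r \<noteq> 0"
    using floquet_imp_bloch_solution[OF assms(1)] by blast
  note bound = bloch_norm_le[of \<phi> \<mu>, OF \<phi>(2) assms(2)]
  have "\<not> l2_closed (Tlam ` {x. is_l2 x})"
    using closed_range_imp_Tlam_in_range[OF _ damped_LIMSEQ_zero[of \<phi>, OF bound] is_l2_Tlam_damped[of \<phi>, OF \<phi>(1) bound]]
      damped_bloch_not_in_range[OF assms \<phi> bound] by blast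
  then show ?thesis
    by (simp add: ess_spectrum_iff fredholm_l2_def)
qed

section \<open>The symbol vanishes at the reciprocals of the multipliers\<close>

definition Fsym :: "complex \<Rightarrow> complex mat" where
  "Fsym z = symbol_mat k a b c z - lam \<cdot>\<^sub>m 1\<^sub>m k"

lemma Fsym_carrier: "Fsym z \<in> carrier_mat k k"
  by (auto simp: Fsym_def symbol_mat_def)

definition band :: "nat \<Rightarrow> nat \<Rightarrow> complex" where
  "band i j = (if i = j then a (Suc i) - lam else 0) + (if j = Suc i then b (Suc i) else 0)
     + (if i = Suc j then c (Suc j) else 0)"

lemma Fsym_index:
  assumes "i < k" and "j < k"
  shows "Fsym z $$ (i, j) = band i j + (if i = k - 1 \<and> j = 0 then b k / z else 0)
     + (if i = 0 \<and> j = k - 1 then c k * z else 0)"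
proof -
  have "Fsym z $$ (i, j) = (if i = j then a (Suc i) else 0) + (if j = Suc i then b (Suc i) else 0)
      + (if i = Suc j then c (Suc j) else 0) + (if i = k - 1 \<and> j = 0 then b k / z else 0)
      + (if i = 0 \<and> j = k - 1 then c k * z else 0) - (if i = j then lam else 0)"
    using assms by (simp add: Fsym_def symbol_mat_def split del: if_split) simp
  then show ?thesis
    by (cases "i = j") (simp_all add: band_def split del: if_split)
qed

lemma Fsym_mult_vec_index:
  assumes "i < k"
  shows "(Fsym z *\<^sub>v vec k v) $ i = (a (Suc i) - lam) * v i
     + (if Suc i < k then b (Suc i) * v (Suc i) else 0) + (if 0 < i then c i * v (i - 1) else 0)
     + (if i = k - 1 then b k / z * v 0 else 0) + (if i = 0 then c k * z * v (k - 1) else 0)"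
proof -
  have "(Fsym z *\<^sub>v vec k v) $ i = (\<Sum>j<k. Fsym z $$ (i, j) * v j)"
    using assms Fsym_carrier[of z] by (simp add: scalar_prod_def lessThan_atLeast0)
  also have "\<dots> = (\<Sum>j<k. (if j = i then a (Suc i) - lam else 0) * v j)
      + (\<Sum>j<k. (if j = Suc i then b (Suc i) else 0) * v j)
      + (\<Sum>j<k. (if j = i - 1 then (if 0 < i then c i else 0) else 0) * v j)
      + (\<Sum>j<k. (if j = 0 then (if i = k - 1 then b k / z else 0) else 0) * v j)
      + (\<Sum>j<k. (if j = k - 1 then (if i = 0 then c k * z else 0) else 0) * v j)"
    unfolding sum.distrib[symmetric]
  proof (intro sum.cong refl)
    fix j
    assume "j \<in> {..<k}"
    have "(if i = Suc j then c (Suc j) else 0) = (if j = i - 1 then (if 0 < i then c i else 0) else 0)"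
      by auto
    moreover have "(if i = k - 1 \<and> j = 0 then b k / z else 0) = (if j = 0 then (if i = k - 1 then b k / z else 0) else 0)"
      and "(if i = 0 \<and> j = k - 1 then c k * z else 0) = (if j = k - 1 then (if i = 0 then c k * z else 0) else 0)"
      by simp_all
    ultimately show "Fsym z $$ (i, j) * v j = (if j = i then a (Suc i) - lam else 0) * v j
      + (if j = Suc i then b (Suc i) else 0) * v j
      + (if j = i - 1 then (if 0 < i then c i else 0) else 0) * v j
      + (if j = 0 then (if i = k - 1 then b k / z else 0) else 0) * v j
      + (if j = k - 1 then (if i = 0 then c k * z else 0) else 0) * v j"
      using \<open>j \<in> {..<k}\<close> assms
      by (simp add: Fsym_index band_def eq_commute[of i j] distrib_right split del: if_split)
  qed
  moreover have "i - 1 < k" and "0 < k"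
    using assms by simp_all
  ultimately show ?thesis
    using assms by (simp add: sum_if_eq_mult)
qed

text \<open>With z = 1/w, the corner entries b k / z and c k z of the symbol supply the neighbours of
  the row k + i that lie outside the period {k..<2k}.\<close>

lemma bloch_superdiagonal_row:
  assumes shift: "\<And>n. \<psi> (n + k) = w * \<psi> n" and "w \<noteq> 0" and i: "i < k"
  shows "w * (if Suc i < k then b (Suc i) * \<psi> (Suc i) else 0)
      + w * (if i = k - 1 then b k / (1 / w) * \<psi> 0 else 0) = b (P (k + i)) * \<psi> (Suc (k + i))"
proof (cases "Suc i < k")
  case True
  have "\<psi> (Suc (k + i)) = w * \<psi> (Suc i)"
    using shift[of "Suc i"] by (metis add.commute add_Suc_right)
  then show ?thesis
    using True by (simp add: period_index_add_k)
next
  case False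
  then have "Suc i = k"
    using i by simp
  have "\<psi> (Suc (k + i)) = w * \<psi> (Suc i)"
    using shift[of "Suc i"] by (metis add.commute add_Suc_right)
  also have "\<psi> (Suc i) = \<psi> (0 + k)"
    using \<open>Suc i = k\<close> by simp
  also have "\<dots> = w * \<psi> 0"
    by (rule shift)
  finally have "\<psi> (Suc (k + i)) = w * (w * \<psi> 0)" .
  moreover have "P (k + i) = k"
    using period_index_add_k[OF i] \<open>Suc i = k\<close> by simp
  ultimately show ?thesis
    using \<open>Suc i = k\<close> \<open>w \<noteq> 0\<close> by (simp add: field_simps)
qed

lemma bloch_subdiagonal_row:
  assumes shift: "\<And>n. \<psi> (n + k) = w * \<psi> n" and "w \<noteq> 0" and i: "i < k"
  shows "w * (if 0 < i then c i * \<psi> (i - 1) else 0)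
      + w * (if i = 0 then c k * (1 / w) * \<psi> (k - 1) else 0) = c (P (k + i - 1)) * \<psi> (k + i - 1)"
proof (cases "i = 0")
  case True
  then show ?thesis
    using period_index_add_k_minus_1[OF i] \<open>w \<noteq> 0\<close> by simp
next
  case False
  then have "k + i - 1 = (i - 1) + k"
    by simp
  then show ?thesis
    using False period_index_add_k_minus_1[OF i] shift[of "i - 1"] by simp
qed

lemma Fsym_mult_bloch:
  assumes shift: "\<And>n. \<psi> (n + k) = w * \<psi> n" and "w \<noteq> 0" and i: "i < k"
  shows "w * (Fsym (1 / w) *\<^sub>v vec k \<psi>) $ i = Tlam \<psi> (k + i)"
proof -
  have "\<psi> (k + i) = w * \<psi> i"
    using shift[of i] by (metis add.commute)
  then have diag: "w * ((a (Suc i) - lam) * \<psi> i) = (a (P (k + i)) - lam) * \<psi> (k + i)"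
    using i by (simp add: period_index_add_k)
  have "k + i \<noteq> 0" and "i + k \<noteq> 0"
    using k_pos by simp_all
  have "w * (Fsym (1 / w) *\<^sub>v vec k \<psi>) $ i = w * ((a (Suc i) - lam) * \<psi> i)
      + (w * (if Suc i < k then b (Suc i) * \<psi> (Suc i) else 0)
        + w * (if i = k - 1 then b k / (1 / w) * \<psi> 0 else 0))
      + (w * (if 0 < i then c i * \<psi> (i - 1) else 0)
        + w * (if i = 0 then c k * (1 / w) * \<psi> (k - 1) else 0))"
    unfolding Fsym_mult_vec_index[OF i] by (simp only: distrib_left add_ac)
  also have "\<dots> = Tlam \<psi> (k + i)"
    unfolding diag bloch_superdiagonal_row[of \<psi> w, OF assms] bloch_subdiagonal_row[of \<psi> w, OF assms]
      Tlam_eq[of \<psi> "k + i"]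
    by (simp only: \<open>k + i \<noteq> 0\<close> \<open>i + k \<noteq> 0\<close> if_False add_ac)
  finally show ?thesis .
qed

lemma bloch_rows_vanish:
  assumes shift: "\<And>n. \<psi> (n + k) = w * \<psi> n" and "w \<noteq> 0"
    and period_rows: "\<And>i. i < k \<Longrightarrow> Tlam \<psi> (k + i) = 0"
  shows "Tlam \<psi> (Suc n) = 0"
proof -
  have "Tlam \<psi> (Suc n + k) = w * Tlam \<psi> (Suc n)" for n
    using shift[of n] shift[of "Suc n"] shift[of "Suc (Suc n)"]
      period_index_add_mult[of n 1] period_index_add_mult[of "Suc n" 1]
    by (simp add: Tlam_Suc algebra_simps)
  then have Tlam_shift: "Tlam \<psi> (Suc n + m * k) = w ^ m * Tlam \<psi> (Suc n)" for n m
    using bloch_add_mult[of "\<lambda>n. Tlam \<psi> (Suc n)" w] by simp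
  show ?thesis
  proof (cases "Suc n < k")
    case True
    then show ?thesis
      using Tlam_shift[of n 1] period_rows[of "Suc n"] \<open>w \<noteq> 0\<close> by (simp add: add.commute)
  next
    case False
    define m where "m = (Suc n - k) div k"
    define i where "i = (Suc n - k) mod k"
    have "Suc n = Suc (k + i - 1) + m * k" and "i < k"
      using False k_pos by (simp_all add: m_def i_def)
    then show ?thesis
      using Tlam_shift[of "k + i - 1" m] period_rows[of i] k_pos by (simp add: Suc_diff_le)
  qed
qed

lemma det_Fsym_eq_0_iff:
  assumes "z \<noteq> 0"
  shows "det (Fsym z) = 0 \<longleftrightarrow> floquet (1 / z)"
proof
  assume "det (Fsym z) = 0"
  then obtain v where v: "v \<in> carrier_vec k" "v \<noteq> 0\<^sub>v k" "Fsym z *\<^sub>v v = 0\<^sub>v k"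
    using det_0_iff_vec_prod_zero[OF Fsym_carrier] by blast
  define \<psi> where "\<psi> n = (1 / z) ^ (n div k) * v $ (n mod k)" for n
  have shift: "\<psi> (n + k) = 1 / z * \<psi> n" for n
    using k_pos by (simp add: \<psi>_def)
  have v_eq: "vec k \<psi> = v"
    using v(1) by (intro eq_vecI) (auto simp: \<psi>_def)
  have "Tlam \<psi> (k + i) = 0" if "i < k" for i
    using Fsym_mult_bloch[of \<psi> "1 / z", OF shift _ that] v(3) that assms by (simp add: v_eq)
  then have "Tlam \<psi> (Suc n) = 0" for n
    using bloch_rows_vanish[of \<psi> "1 / z", OF shift] assms by simp
  moreover obtain r where "r < k" "v $ r \<noteq> 0"
    using v(1,2) by (metis carrier_vecD eq_vecI index_zero_vec)
  ultimately show "floquet (1 / z)"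
    using bloch_solution_imp_floquet[of \<psi> "1 / z" r] shift by (simp add: \<psi>_def)
next
  assume "floquet (1 / z)"
  then obtain \<phi> r where \<phi>: "\<And>n. Tlam \<phi> (Suc n) = 0" "\<And>n. \<phi> (n + k) = 1 / z * \<phi> n" "r < k" "\<phi> r \<noteq> 0"
    by (rule floquet_imp_bloch_solution) blast
  have "Tlam \<phi> (k + i) = 0" for i
    using \<phi>(1)[of "k + i - 1"] k_pos by (simp add: Suc_diff_le)
  then have "Fsym z *\<^sub>v vec k \<phi> = 0\<^sub>v k"
    using Fsym_mult_bloch[of \<phi> "1 / z", OF \<phi>(2)] assms Fsym_carrier[of z] by (intro eq_vecI) auto
  moreover have "vec k \<phi> \<noteq> 0\<^sub>v k"
    using \<phi>(3,4) by (metis index_vec index_zero_vec(1))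
  ultimately show "det (Fsym z) = 0"
    using det_0_iff_vec_prod_zero[OF Fsym_carrier] by (metis vec_carrier)
qed

text \<open>Only the rows 0 and k - 1 of the symbol depend on z, through c k z and b k / z.\<close>

lemma laurent_trinomial_Fsym_permutation_product:
  assumes p: "p permutes {0..<k}"
  shows "laurent_trinomial (\<lambda>z. \<Prod>i = 0..<k. Fsym z $$ (i, p i))"
proof (cases "k = 1")
  case True
  then have "p 0 = 0" and "{0..<k} = {0}" and "k - 1 = 0"
    using permutes_in_image[OF p, of 0] by auto
  then have "(\<Prod>i = 0..<k. Fsym z $$ (i, p i)) = band 0 0 + b k / z + c k * z" for z
    using Fsym_index[of 0 0 z] k_pos by simp
  then show ?thesis
    unfolding laurent_trinomial_def by blast
next
  case False
  then have "k \<ge> 2"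
    using k_pos by simp
  have p_lt: "p i < k" if "i < k" for i
    using permutes_in_image[OF p, of i] that by simp
  define Q where "Q = (\<Prod>i\<in>{1..<k - 1}. band i (p i))"
  have "{0..<k} = insert 0 (insert (k - 1) {1..<k - 1})"
    using \<open>k \<ge> 2\<close> by auto
  moreover have "(\<Prod>i\<in>{1..<k - 1}. Fsym z $$ (i, p i)) = Q" for z
    unfolding Q_def
  proof (intro prod.cong refl)
    fix i
    assume "i \<in> {1..<k - 1}"
    then have "i < k" "i \<noteq> 0" "i \<noteq> k - 1"
      by auto
    then show "Fsym z $$ (i, p i) = band i (p i)"
      by (simp add: Fsym_index p_lt)
  qed
  ultimately have "(\<Prod>i = 0..<k. Fsym z $$ (i, p i)) =
      Q * ((band 0 (p 0) + (if p 0 = k - 1 then c k else 0) * z) *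
           (band (k - 1) (p (k - 1)) + (if p (k - 1) = 0 then b k else 0) / z))" for z
    using \<open>k \<ge> 2\<close> by (simp add: Fsym_index p_lt)
  then show ?thesis
    using laurent_trinomial_mult_left[OF laurent_trinomial_linear_mult_inverse_linear] by presburger
qed

lemma laurent_trinomial_det_Fsym: "laurent_trinomial (\<lambda>z. det (Fsym z))"
  unfolding det_def'[OF Fsym_carrier]
  by (intro laurent_trinomial_sum laurent_trinomial_mult_left laurent_trinomial_Fsym_permutation_product)
     (auto simp: finite_permutations)

lemma total_winding_nonneg:
  assumes off_circle: "\<And>\<eta>. floquet \<eta> \<Longrightarrow> cmod \<eta> \<noteq> 1" and "floquet \<mu>" and "cmod \<mu> > 1"
  shows "Re (total_winding k a b c lam) \<ge> 0"
  unfolding total_winding_def Fsym_def[symmetric]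
proof (rule winding_number_laurent_trinomial_nonneg[OF laurent_trinomial_det_Fsym])
  show "det (Fsym z) \<noteq> 0" if "cmod z = 1" for z
  proof
    assume "det (Fsym z) = 0"
    moreover have "z \<noteq> 0"
      using that by auto
    ultimately have "floquet (1 / z)"
      using det_Fsym_eq_0_iff by blast
    then show False
      using off_circle[of "1 / z"] that by (simp add: norm_divide)
  qed
  show "1 / \<mu> \<noteq> 0" and "cmod (1 / \<mu>) < 1"
    using \<open>cmod \<mu> > 1\<close> by (auto simp: norm_divide divide_less_eq)
  then show "det (Fsym (1 / \<mu>)) = 0"
    using det_Fsym_eq_0_iff \<open>floquet \<mu>\<close> by simp
qed

end

theorem theorem2p9:
  fixes k :: nat and a b c :: "nat \<Rightarrow> complex" and lam :: complex
  assumes "k \<ge> 1"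
    and "(\<Prod>j=1..k. c j) \<noteq> 0"
    and "(\<Prod>j=1..k. b j) \<noteq> 0"
    and "lam \<notin> ess_spectrum_ktoeplitz k a b c"
    and "Re (total_winding k a b c lam) < 0"
  shows "\<exists>C>0. \<exists>x \<rho>. is_l2 x \<and> x \<noteq> (\<lambda>_. 0) \<and> ktoeplitz k a b c x = (\<lambda>n. lam * x n) \<and>
           0 \<le> \<rho> \<and> \<rho> < 1 \<and>
           (\<forall>j::nat. j \<ge> 1 \<longrightarrow>
              cmod (x (j - 1)) / (SUP i. cmod (x i))
                \<le> C * real_of_int \<lceil>real j / real k\<rceil> * \<rho> ^ (nat \<lceil>real j / real k\<rceil> - 1))"
proof -
  interpret ktoeplitz_data k a b c lam
    using assms(1,3) by unfold_locales (auto simp: prod_zero_iff)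
  obtain \<mu> \<nu> where roots: "mon_tr = \<mu> + \<nu>" "mon_det = \<mu> * \<nu>"
    using floquet_roots by blast
  have off_circle: "cmod \<eta> \<noteq> 1" if "floquet \<eta>" for \<eta>
    using unimodular_floquet_imp_ess_spectrum[OF that] assms(4) by blast
  have inside: "cmod \<eta> < 1" if "floquet \<eta>" for \<eta>
    using total_winding_nonneg[OF off_circle that] off_circle[OF that] assms(5) by fastforce
  have "floquet \<mu>" "floquet \<nu>"
    using floquet_root roots by (auto simp: algebra_simps)
  then show ?thesis
    using eigenvector_decay[OF roots] inside by blast
qed

end
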